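(* Let $x>0$ and $v\ge0$. Then $\delta(x,v)\ge h(x,v)$, where $$h(x,v)=\begin{cases}\dfrac{12x}{\pi^2(v+\sqrt v+1)}, & 0<x\le\frac{\pi^3}{12}(v+\sqrt v+1),\\[2mm] 2\pi-\Big[\dfrac{\pi^8(v+\sqrt v+1)}{12x}\Big]^{1/5}, & \frac{\pi^3}{12}(v+\sqrt v+1)\le x<\infty.\end{cases}$$
   Context: For $v\ge0$ and $0<|\delta|<2\pi$ let $f(v,\delta)=\frac{(v+1)(\delta-\sin\delta)+2\sqrt v(2\sin\frac\delta2-\delta\cos\frac\delta2)}{2\sin^2\frac\delta2}$ (nonnegative square root), and $f(v,0)=0$. For $x\in\mathbb{R}$, $v\ge0$, $\delta(x,v)$ denotes the unique $\delta\in(-2\pi,2\pi)$ with $f(v,\delta)=x$. *)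

theory Defs
  imports "HOL-Analysis.Analysis"
begin

definition f_fun :: "real \<Rightarrow> real \<Rightarrow> real" where
  "f_fun v \<delta> = (if \<delta> = 0 then 0 else
     ((v + 1) * (\<delta> - sin \<delta>) + 2 * sqrt v * (2 * sin (\<delta>/2) - \<delta> * cos (\<delta>/2)))
       / (2 * (sin (\<delta>/2))^2))"

definition delta_fun :: "real \<Rightarrow> real \<Rightarrow> real" where
  "delta_fun x v = (THE \<delta>. -2*pi < \<delta> \<and> \<delta> < 2*pi \<and> f_fun v \<delta> = x)"

definition h_fun :: "real \<Rightarrow> real \<Rightarrow> real" where
  "h_fun x v = (if x \<le> pi^3 / 12 * (v + sqrt v + 1)
      then 12 * x / (pi^2 * (v + sqrt v + 1))
      else 2*pi - root 5 (pi^8 * (v + sqrt v + 1) / (12 * x)))"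

end

theory Submission
  imports Defs
begin

text \<open>
  For \<open>0 < \<delta> < 2\<pi>\<close> and \<open>a = \<delta>/2\<close> the double-angle formula gives
  \<open>f(v, \<delta>) = (v + 1) fA(a) + 2 \<surd>v fB(a)\<close> with
  \<open>fA(a) = (a - sin a cos a) / sin\<^sup>2 a\<close> and \<open>fB(a) = (sin a - a cos a) / sin\<^sup>2 a\<close>,
  both positive and strictly increasing on \<open>(0, \<pi>)\<close>. As \<open>f(v, \<cdot>)\<close> is also odd, continuous and
  unbounded on \<open>(0, 2\<pi>)\<close>, the root \<open>\<delta>(x, v)\<close> is at least \<open>h\<close> as soon as \<open>0 < h < 2\<pi>\<close> and
  \<open>f(v, h) \<le> x\<close>. Both branches of \<open>h\<close> are designed to make this hold: for \<open>a \<le> \<pi>/2\<close> one has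
  \<open>fA(a), 2 fB(a) \<le> \<pi>\<^sup>2a/6\<close> (from \<open>sin a - a cos a \<le> a\<^sup>3/3\<close> and Jordan's inequality
  \<open>sin a \<ge> 2a/\<pi>\<close>), and for \<open>a = \<pi> - b\<close> with \<open>b \<le> \<pi>/2\<close> one has \<open>fA(a), 2 fB(a) \<le> \<pi>\<^sup>8/(384 b\<^sup>5)\<close>.
\<close>

lemma sin_minus_mult_cos_pos:
  fixes a :: real
  assumes "0 < a" "a < pi"
  shows "0 < sin a - a * cos a"
proof -
  have "(\<lambda>t. sin t - t * cos t) 0 < (\<lambda>t. sin t - t * cos t) a"
  proof (rule DERIV_pos_imp_increasing_open[OF assms(1)])
    fix t assume t: "0 < t" "t < a"
    show "\<exists>y. ((\<lambda>t. sin t - t * cos t) has_real_derivative y) (at t) \<and> 0 < y"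
      using t assms
      by (intro exI[of _ "t * sin t"]) (auto intro!: derivative_eq_intros sin_gt_zero mult_pos_pos)
  qed (intro continuous_intros)
  then show ?thesis by simp
qed

lemma sin_minus_mult_cos_le:
  fixes a :: real
  assumes "0 \<le> a"
  shows "sin a - a * cos a \<le> a ^ 3 / 3"
proof -
  have "(\<lambda>t. t ^ 3 / 3 - sin t + t * cos t) 0 \<le> (\<lambda>t. t ^ 3 / 3 - sin t + t * cos t) a"
  proof (rule DERIV_nonneg_imp_nondecreasing[OF assms])
    fix t :: real assume "0 \<le> t"
    then have "t * sin t \<le> t * t" using sin_x_le_x by (simp add: mult_left_mono)
    then show "\<exists>y. ((\<lambda>t. t ^ 3 / 3 - sin t + t * cos t) has_real_derivative y) (at t) \<and> 0 \<le> y"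
      by (intro exI[of _ "t\<^sup>2 - t * sin t"]) (auto intro!: derivative_eq_intros simp: power2_eq_square)
  qed
  then show ?thesis by simp
qed

text \<open>Jordan's inequality: \<open>sin x / x\<close> decreases on \<open>(0, \<pi>/2]\<close>.\<close>

lemma sin_ge_jordan:
  fixes x :: real
  assumes "0 < x" "x \<le> pi / 2"
  shows "2 * x / pi \<le> sin x"
proof -
  have "(\<lambda>t. - sin t / t) x \<le> (\<lambda>t. - sin t / t) (pi / 2)"
  proof (rule DERIV_nonneg_imp_nondecreasing[OF assms(2)])
    fix t assume t: "x \<le> t" "t \<le> pi / 2"
    then have "0 < t" "0 < sin t - t * cos t"
      using assms sin_minus_mult_cos_pos[of t] pi_gt_zero by auto
    then show "\<exists>y. ((\<lambda>t. - sin t / t) has_real_derivative y) (at t) \<and> 0 \<le> y"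
      by (intro exI[of _ "(sin t - t * cos t) / t\<^sup>2"])
        (auto intro!: derivative_eq_intros simp: power2_eq_square field_simps)
  qed
  then show ?thesis using assms by (simp add: field_simps)
qed

lemma cos_le_pi_half_minus:
  fixes b :: real
  assumes "b \<le> pi / 2"
  shows "cos b \<le> pi / 2 - b"
  using sin_x_le_x[of "pi / 2 - b"] assms by (simp add: sin_cos_eq)

lemma sin_sq_ge_jordan:
  fixes x :: real
  assumes "0 < x" "x \<le> pi / 2"
  shows "(2 * x / pi)\<^sup>2 \<le> (sin x)\<^sup>2"
  using sin_ge_jordan[OF assms] assms by (intro power_mono) auto

lemma pi_squared_ge_9: "9 \<le> pi\<^sup>2"
  using mult_mono[of 3 pi 3 pi] pi_gt3 by (simp add: power2_eq_square)

lemma cube_weighted_le_fourth_power: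
  fixes w u :: real
  assumes "0 \<le> w" "w \<le> u"
  shows "(3 * u - 2 * w) * w ^ 3 \<le> u ^ 4"
proof -
  have "w ^ 3 \<le> u ^ 3" using assms by (simp add: power_mono)
  moreover have "w ^ 3 \<le> u\<^sup>2 * w"
    using assms by (simp add: power3_eq_cube power2_eq_square mult_right_mono mult_mono)
  moreover have "w ^ 3 \<le> u * w\<^sup>2"
    using assms mult_right_mono[of w u "w * w"] by (simp add: power3_eq_cube power2_eq_square mult.assoc)
  moreover have "0 \<le> w ^ 3" using assms by simp
  ultimately have "0 \<le> u ^ 3 + u\<^sup>2 * w + u * w\<^sup>2 - 2 * w ^ 3" by linarith
  then have "0 \<le> (u - w) * (u ^ 3 + u\<^sup>2 * w + u * w\<^sup>2 - 2 * w ^ 3)"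
    using assms by simp
  moreover have "u ^ 4 - (3 * u - 2 * w) * w ^ 3 = (u - w) * (u ^ 3 + u\<^sup>2 * w + u * w\<^sup>2 - 2 * w ^ 3)"
    by algebra
  ultimately show ?thesis by simp
qed

lemma cube_weighted_le_cube:
  fixes w u :: real
  assumes "0 \<le> w" "w \<le> u" "u\<^sup>2 \<le> 3"
  shows "(1 + (2 * u - w) * (u - w)) * w ^ 3 \<le> u ^ 3"
proof -
  have "(2 * u - w) * w \<le> u\<^sup>2"
    using zero_le_power2[of "u - w"] by (simp add: power2_diff algebra_simps power2_eq_square)
  then have "(2 * u - w) * w ^ 3 \<le> (u * w) * (u * w)"
    using mult_right_mono[of "(2 * u - w) * w" "u\<^sup>2" "w\<^sup>2"]
    by (simp add: power2_eq_square power3_eq_cube algebra_simps)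
  also have "\<dots> \<le> 3 * (u * w)"
    using assms mult_left_mono[of w u u] by (intro mult_right_mono) (auto simp: power2_eq_square)
  also have "\<dots> \<le> u\<^sup>2 + u * w + w\<^sup>2"
    using zero_le_power2[of "u - w"] by (simp add: power2_diff)
  finally have "0 \<le> (u - w) * (u\<^sup>2 + u * w + w\<^sup>2 - (2 * u - w) * w ^ 3)"
    using assms by simp
  moreover have "u ^ 3 - (1 + (2 * u - w) * (u - w)) * w ^ 3
      = (u - w) * (u\<^sup>2 + u * w + w\<^sup>2 - (2 * u - w) * w ^ 3)"
    by algebra
  ultimately show ?thesis by simp
qed

section \<open>The two summands of \<open>f\<close>\<close>

definition fA :: "real \<Rightarrow> real" where
  "fA a = (a - sin a * cos a) / (sin a)\<^sup>2"

definition fB :: "real \<Rightarrow> real" where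
  "fB a = (sin a - a * cos a) / (sin a)\<^sup>2"

lemma f_fun_eq_fA_fB:
  assumes "0 < d" "d < 2 * pi"
  shows "f_fun v d = (v + 1) * fA (d / 2) + 2 * sqrt v * fB (d / 2)"
proof -
  have "sin (d / 2) \<noteq> 0" using sin_gt_zero[of "d / 2"] assms by simp
  moreover have "sin d = 2 * sin (d / 2) * cos (d / 2)" using sin_double[of "d / 2"] by simp
  ultimately show ?thesis
    unfolding f_fun_def fA_def fB_def using assms by (simp add: field_simps power2_eq_square)
qed

lemma fA_has_real_derivative:
  assumes "sin t \<noteq> 0"
  shows "(fA has_real_derivative 2 * (sin t - t * cos t) / (sin t) ^ 3) (at t)"
proof -
  have "(fA has_real_derivative ((1 - (cos t * cos t - sin t * sin t)) * (sin t)\<^sup>2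
      - (t - sin t * cos t) * (2 * sin t * cos t)) / ((sin t)\<^sup>2 * (sin t)\<^sup>2)) (at t)"
    unfolding fA_def using assms by (auto intro!: derivative_eq_intros simp: power2_eq_square)
  moreover have "(1 - (cos t * cos t - sin t * sin t)) * (sin t)\<^sup>2
      - (t - sin t * cos t) * (2 * sin t * cos t) = 2 * sin t * (sin t - t * cos t)"
    using sin_cos_squared_add[of t] by algebra
  moreover have "2 * sin t * (sin t - t * cos t) / ((sin t)\<^sup>2 * (sin t)\<^sup>2)
      = 2 * (sin t - t * cos t) / (sin t) ^ 3"
    using assms by (simp add: field_simps power2_eq_square power3_eq_cube)
  ultimately show ?thesis by simp
qed

lemma fB_has_real_derivative:
  assumes "sin t \<noteq> 0"
  shows "(fB has_real_derivative (t * (1 + (cos t)\<^sup>2) - 2 * sin t * cos t) / (sin t) ^ 3) (at t)"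
proof -
  have "(fB has_real_derivative ((cos t - (cos t - t * sin t)) * (sin t)\<^sup>2
      - (sin t - t * cos t) * (2 * sin t * cos t)) / ((sin t)\<^sup>2 * (sin t)\<^sup>2)) (at t)"
    unfolding fB_def using assms by (auto intro!: derivative_eq_intros simp: power2_eq_square)
  moreover have "(cos t - (cos t - t * sin t)) * (sin t)\<^sup>2 - (sin t - t * cos t) * (2 * sin t * cos t)
      = sin t * (t * (1 + (cos t)\<^sup>2) - 2 * sin t * cos t)"
    using sin_cos_squared_add[of t] by algebra
  moreover have "sin t * (t * (1 + (cos t)\<^sup>2) - 2 * sin t * cos t) / ((sin t)\<^sup>2 * (sin t)\<^sup>2)
      = (t * (1 + (cos t)\<^sup>2) - 2 * sin t * cos t) / (sin t) ^ 3"
    using assms by (simp add: field_simps power2_eq_square power3_eq_cube)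
  ultimately show ?thesis by simp
qed

lemma cos_less_one:
  fixes t :: real
  assumes "0 < t" "t < pi"
  shows "cos t < 1"
proof -
  have "cos t \<noteq> 1"
    using sin_gt_zero[OF assms] sin_cos_squared_add[of t] by (auto simp: power2_eq_square)
  then show ?thesis using cos_le_one[of t] by linarith
qed

text \<open>For \<open>cos t > 0\<close> the numerator is at least \<open>t (1 - cos t)\<^sup>2\<close>, using \<open>sin t \<le> t\<close>.\<close>

lemma fB_derivative_numerator_pos:
  fixes t :: real
  assumes "0 < t" "t < pi"
  shows "0 < t * (1 + (cos t)\<^sup>2) - 2 * sin t * cos t"
proof (cases "cos t \<le> 0")
  case True
  then have "sin t * cos t \<le> 0" using sin_gt_zero[OF assms] by (simp add: mult_nonneg_nonpos)
  moreover have "0 < t * (1 + (cos t)\<^sup>2)" using assms by (simp add: add_pos_nonneg)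
  ultimately show ?thesis by linarith
next
  case False
  then have "2 * sin t * cos t \<le> 2 * t * cos t"
    using sin_x_le_x[of t] assms by (simp add: mult_right_mono)
  moreover have "0 < t * (1 - cos t)\<^sup>2" using cos_less_one[OF assms] assms by simp
  ultimately show ?thesis by (simp add: power2_eq_square algebra_simps)
qed

lemma fA_less:
  assumes "0 < a" "a < b" "b < pi"
  shows "fA a < fA b"
proof (rule DERIV_pos_imp_increasing[OF assms(2)])
  fix t assume "a \<le> t" "t \<le> b"
  then have t: "0 < t" "t < pi" using assms by auto
  show "\<exists>y. (fA has_real_derivative y) (at t) \<and> 0 < y"
    using sin_gt_zero[OF t] sin_minus_mult_cos_pos[OF t]
    by (intro exI[of _ "2 * (sin t - t * cos t) / (sin t) ^ 3"] conjI fA_has_real_derivative)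
      simp_all
qed

lemma fB_less:
  assumes "0 < a" "a < b" "b < pi"
  shows "fB a < fB b"
proof (rule DERIV_pos_imp_increasing[OF assms(2)])
  fix t assume "a \<le> t" "t \<le> b"
  then have t: "0 < t" "t < pi" using assms by auto
  show "\<exists>y. (fB has_real_derivative y) (at t) \<and> 0 < y"
    using sin_gt_zero[OF t] fB_derivative_numerator_pos[OF t]
    by (intro exI[of _ "(t * (1 + (cos t)\<^sup>2) - 2 * sin t * cos t) / (sin t) ^ 3"]
        conjI fB_has_real_derivative) simp_all
qed

lemma fA_pos:
  fixes t :: real
  assumes "0 < t" "t < pi"
  shows "0 < fA t"
proof -
  have s: "0 < sin t" using sin_gt_zero[OF assms] .
  have "sin t * cos t < t"
  proof (cases "cos t \<le> 0")
    case True
    then have "sin t * cos t \<le> 0" using s by (simp add: mult_nonneg_nonpos)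
    then show ?thesis using assms by linarith
  next
    case False
    then have "sin t * cos t < sin t" using s cos_less_one[OF assms] by simp
    then show ?thesis using sin_x_le_x[of t] assms by simp
  qed
  then show ?thesis unfolding fA_def using s by simp
qed

lemma fB_pos:
  fixes t :: real
  assumes "0 < t" "t < pi"
  shows "0 < fB t"
  unfolding fB_def using sin_minus_mult_cos_pos[OF assms] sin_gt_zero[OF assms] by simp

section \<open>Monotonicity and range of \<open>f(v, \<cdot>)\<close>\<close>

lemma f_fun_less:
  assumes "0 \<le> v" "0 < d1" "d1 < d2" "d2 < 2 * pi"
  shows "f_fun v d1 < f_fun v d2"
proof -
  have "fA (d1 / 2) < fA (d2 / 2)" "fB (d1 / 2) < fB (d2 / 2)"
    using assms by (auto intro: fA_less fB_less)
  then have "(v + 1) * fA (d1 / 2) < (v + 1) * fA (d2 / 2)"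
    and "2 * sqrt v * fB (d1 / 2) \<le> 2 * sqrt v * fB (d2 / 2)"
    using assms by (simp, intro mult_left_mono) simp_all
  then show ?thesis using f_fun_eq_fA_fB[of d1 v] f_fun_eq_fA_fB[of d2 v] assms by linarith
qed

lemma f_fun_pos:
  assumes "0 \<le> v" "0 < d" "d < 2 * pi"
  shows "0 < f_fun v d"
proof -
  have "0 < fA (d / 2)" "0 < fB (d / 2)" using assms by (auto intro: fA_pos fB_pos)
  then show ?thesis using f_fun_eq_fA_fB[of d v] assms by (simp add: add_pos_nonneg)
qed

lemma f_fun_minus: "f_fun v (- d) = - f_fun v d"
  unfolding f_fun_def
  by (simp add: minus_divide_left[symmetric]) (simp add: divide_simps algebra_simps)

lemma continuous_on_f_fun:
  assumes "0 < p" "q < 2 * pi"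
  shows "continuous_on {p..q} (f_fun v)"
proof -
  let ?g = "\<lambda>d. ((v + 1) * (d - sin d) + 2 * sqrt v * (2 * sin (d / 2) - d * cos (d / 2)))
              / (2 * (sin (d / 2))\<^sup>2)"
  have "continuous_on {p..q} ?g"
  proof (intro continuous_intros ballI)
    fix d assume "d \<in> {p..q}"
    then have "0 < sin (d / 2)" using assms by (intro sin_gt_zero) auto
    then show "2 * (sin (d / 2))\<^sup>2 \<noteq> 0" by simp
  qed auto
  then show ?thesis
    by (rule continuous_on_eq) (use assms in \<open>auto simp: f_fun_def\<close>)
qed

text \<open>With \<open>b = 1/(x+1)\<close>: \<open>x \<le> 2/b\<^sup>2 \<le> 2/sin\<^sup>2 b \<le> fA(\<pi> - b) \<le> f(v, 2\<pi> - 2b)\<close>.\<close>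

lemma f_fun_unbounded:
  assumes "0 < x" "0 \<le> v"
  obtains d where "0 < d" "d < 2 * pi" "x \<le> f_fun v d"
proof -
  define b where "b = 1 / (x + 1)"
  have b: "0 < b" "b < 1" using assms by (auto simp: b_def)
  then have b': "b < pi" "b \<le> pi / 2" using pi_gt3 by auto
  have s: "0 < sin b" using sin_gt_zero[OF b(1) b'(1)] .
  have c: "0 \<le> cos b" using b b' by (intro cos_ge_zero) auto
  have "x \<le> 2 * (x + 1)\<^sup>2" using assms by (simp add: power2_eq_square algebra_simps)
  also have "\<dots> = 2 / b\<^sup>2" using assms by (simp add: b_def field_simps)
  also have "\<dots> \<le> 2 / (sin b)\<^sup>2"
    using s sin_x_le_x[of b] b by (intro divide_left_mono power_mono mult_pos_pos) auto
  also have "\<dots> \<le> (pi - b + sin b * cos b) / (sin b)\<^sup>2"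
  proof (intro divide_right_mono)
    show "2 \<le> pi - b + sin b * cos b"
      using mult_nonneg_nonneg[of "sin b" "cos b"] s c b pi_gt3 by linarith
  qed simp
  also have "\<dots> = fA (pi - b)" unfolding fA_def by simp
  also have "\<dots> \<le> f_fun v (2 * pi - 2 * b)"
  proof -
    have "0 < fA (pi - b)" "0 < fB (pi - b)" using b b' by (auto intro: fA_pos fB_pos)
    then have "fA (pi - b) \<le> (v + 1) * fA (pi - b)" "0 \<le> 2 * sqrt v * fB (pi - b)"
      using assms by simp_all
    moreover have "0 < 2 * pi - 2 * b" "2 * pi - 2 * b < 2 * pi" using b' b by auto
    moreover have "(2 * pi - 2 * b) / 2 = pi - b" by simp
    ultimately show ?thesis using f_fun_eq_fA_fB[of "2 * pi - 2 * b" v] by (simp only:)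
  qed
  finally show ?thesis using b b' by (intro that[of "2 * pi - 2 * b"]) auto
qed

lemma delta_fun_eqI:
  assumes "0 \<le> v" "0 < d" "d < 2 * pi" "f_fun v d = x"
  shows "delta_fun x v = d"
  unfolding delta_fun_def
proof (rule the_equality)
  show "- 2 * pi < d \<and> d < 2 * pi \<and> f_fun v d = x" using assms pi_gt_zero by simp
next
  fix e assume e: "- 2 * pi < e \<and> e < 2 * pi \<and> f_fun v e = x"
  have "0 < x" using f_fun_pos[of v d] assms by simp
  have "0 < e"
  proof (rule ccontr)
    assume "\<not> 0 < e"
    moreover have "e \<noteq> 0" using e \<open>0 < x\<close> unfolding f_fun_def by auto
    ultimately have "0 < f_fun v (- e)" using f_fun_pos[of v "- e"] e assms by simp
    then show False using f_fun_minus[of v e] e \<open>0 < x\<close> by simp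
  qed
  show "e = d"
  proof (rule ccontr)
    assume "e \<noteq> d"
    then have "f_fun v e \<noteq> f_fun v d"
      using f_fun_less[of v e d] f_fun_less[of v d e] \<open>0 < e\<close> e assms
      by (cases "e < d") auto
    then show False using e assms by simp
  qed
qed

lemma delta_fun_ge:
  assumes "0 \<le> v" "0 < h" "h < 2 * pi" "f_fun v h \<le> x"
  shows "h \<le> delta_fun x v"
proof -
  have "0 < x" using f_fun_pos[of v h] assms by simp
  then obtain d where d: "0 < d" "d < 2 * pi" "x \<le> f_fun v d"
    using f_fun_unbounded assms(1) by blast
  have "h \<le> d"
  proof (rule ccontr)
    assume "\<not> h \<le> d"
    then have "f_fun v d < f_fun v h" using f_fun_less[of v d h] d assms by simp
    then show False using d assms by simp
  qed
  then obtain e where "h \<le> e" "e \<le> d" "f_fun v e = x"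
    using IVT'[of "f_fun v" h x d] continuous_on_f_fun[of h d v] assms d by auto
  then show ?thesis using delta_fun_eqI[of v e x] assms d by simp
qed

section \<open>Upper bounds for \<open>f\<close> on the two branches of \<open>h\<close>\<close>

lemma fA_le_small:
  assumes "0 < a" "a \<le> pi / 2"
  shows "fA a \<le> a"
proof -
  have a: "0 < a" "a < pi" using assms pi_gt_zero by linarith+
  have "cos a * (a * cos a - sin a) \<le> 0"
    using cos_ge_zero[of a] assms sin_minus_mult_cos_pos[OF a] by (simp add: mult_nonneg_nonpos)
  then have "a * (cos a)\<^sup>2 \<le> sin a * cos a" by (simp add: algebra_simps power2_eq_square)
  moreover have "a * (cos a)\<^sup>2 = a - a * (sin a)\<^sup>2" using sin_cos_squared_add[of a] by algebra
  ultimately have "a - sin a * cos a \<le> a * (sin a)\<^sup>2" by linarith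
  then show ?thesis unfolding fA_def using sin_gt_zero[OF a] by (simp add: divide_le_eq)
qed

lemma fB_le_small:
  assumes "0 < a" "a \<le> pi / 2"
  shows "fB a \<le> pi\<^sup>2 * a / 12"
proof -
  have s: "0 < sin a" using assms pi_gt_zero by (intro sin_gt_zero) auto
  have "fB a \<le> (a ^ 3 / 3) / (sin a)\<^sup>2"
    unfolding fB_def using sin_minus_mult_cos_le[of a] assms by (intro divide_right_mono) auto
  also have "\<dots> \<le> (a ^ 3 / 3) / (2 * a / pi)\<^sup>2"
    using sin_sq_ge_jordan[OF assms] assms s by (intro divide_left_mono) auto
  also have "\<dots> = pi\<^sup>2 * a / 12"
    using assms by (simp add: field_simps power2_eq_square power3_eq_cube)
  finally show ?thesis .
qed

lemma fA_le_large:
  assumes "0 < b" "b \<le> pi / 2"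
  shows "fA (pi - b) \<le> pi ^ 8 / (384 * b ^ 5)"
proof -
  have s: "0 < sin b" using assms pi_gt_zero by (intro sin_gt_zero) auto
  have c: "0 \<le> cos b" using assms by (intro cos_ge_zero) auto
  have "sin b * cos b \<le> cos b" using mult_right_mono[of "sin b" 1 "cos b"] c by simp
  then have N: "pi - b + sin b * cos b \<le> 3 * pi / 2 - 2 * b"
    using cos_le_pi_half_minus[OF assms(2)] by simp
  have "fA (pi - b) = (pi - b + sin b * cos b) / (sin b)\<^sup>2" unfolding fA_def by simp
  also have "\<dots> \<le> (3 * pi / 2 - 2 * b) / (2 * b / pi)\<^sup>2"
  proof (rule frac_le)
    show "0 \<le> 3 * pi / 2 - 2 * b" using assms pi_gt_zero by linarith
  qed (use N sin_sq_ge_jordan[OF assms] assms in simp_all)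
  also have "\<dots> = ((3 * (pi / 2) - 2 * b) * b ^ 3) * 96 * pi\<^sup>2 / (384 * b ^ 5)"
    using assms by (simp add: field_simps power2_eq_square power3_eq_cube eval_nat_numeral)
  also have "\<dots> \<le> (pi / 2) ^ 4 * 96 * pi\<^sup>2 / (384 * b ^ 5)"
    using cube_weighted_le_fourth_power[of b "pi / 2"] assms
    by (intro divide_right_mono mult_right_mono) auto
  also have "\<dots> = 6 * pi ^ 6 / (384 * b ^ 5)" by (simp add: power_divide eval_nat_numeral)
  also have "\<dots> \<le> pi\<^sup>2 * pi ^ 6 / (384 * b ^ 5)"
    using pi_squared_ge_9 assms by (intro divide_right_mono mult_right_mono) auto
  also have "\<dots> = pi ^ 8 / (384 * b ^ 5)" by (simp add: power_add[symmetric])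
  finally show ?thesis .
qed

lemma fB_le_large:
  assumes "0 < b" "b \<le> pi / 2"
  shows "2 * fB (pi - b) \<le> pi ^ 8 / (384 * b ^ 5)"
proof -
  have s: "0 < sin b" using assms pi_gt_zero by (intro sin_gt_zero) auto
  define M where "M = 1 + (pi - b) * (pi / 2 - b)"
  have "(pi - b) * cos b \<le> (pi - b) * (pi / 2 - b)"
    using cos_le_pi_half_minus[OF assms(2)] assms by (intro mult_left_mono) auto
  then have N: "sin b + (pi - b) * cos b \<le> M" unfolding M_def using sin_le_one[of b] by linarith
  have "(pi / 2)\<^sup>2 \<le> 3"
    using power_mono[of pi "3.1416" 2] pi_approx(2) by (simp add: power_divide)
  then have Mb: "M * b ^ 3 \<le> (pi / 2) ^ 3"
    unfolding M_def using cube_weighted_le_cube[of b "pi / 2"] assms by simp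
  have "2 * fB (pi - b) = 2 * ((sin b + (pi - b) * cos b) / (sin b)\<^sup>2)" unfolding fB_def by simp
  also have "\<dots> \<le> 2 * (M / (2 * b / pi)\<^sup>2)"
  proof (intro mult_left_mono frac_le)
    show "0 \<le> M" unfolding M_def using assms by (intro add_nonneg_nonneg mult_nonneg_nonneg) auto
  qed (use N sin_sq_ge_jordan[OF assms] assms in simp_all)
  also have "\<dots> = (M * b ^ 3) * 192 * pi\<^sup>2 / (384 * b ^ 5)"
    using assms by (simp add: field_simps power2_eq_square power3_eq_cube eval_nat_numeral)
  also have "\<dots> \<le> (pi / 2) ^ 3 * 192 * pi\<^sup>2 / (384 * b ^ 5)"
    using Mb assms by (intro divide_right_mono mult_right_mono) auto
  also have "\<dots> = 24 * pi ^ 5 / (384 * b ^ 5)" by (simp add: power_divide eval_nat_numeral)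
  also have "\<dots> \<le> pi ^ 3 * pi ^ 5 / (384 * b ^ 5)"
    using power_mono[of 3 pi 3] pi_gt3 assms by (intro divide_right_mono mult_right_mono) auto
  also have "\<dots> = pi ^ 8 / (384 * b ^ 5)" by (simp add: power_add[symmetric])
  finally show ?thesis .
qed

lemma f_fun_le_of_bounds:
  assumes "0 \<le> v" "0 < d" "d < 2 * pi" "fA (d / 2) \<le> K" "2 * fB (d / 2) \<le> K"
  shows "f_fun v d \<le> (v + sqrt v + 1) * K"
proof -
  have "(v + 1) * fA (d / 2) \<le> (v + 1) * K" "sqrt v * (2 * fB (d / 2)) \<le> sqrt v * K"
    using assms by (auto intro: mult_left_mono)
  then show ?thesis using f_fun_eq_fA_fB[of d v] assms by (simp add: algebra_simps)
qed

lemma f_fun_le_small: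
  assumes "0 \<le> v" "0 < d" "d \<le> pi"
  shows "f_fun v d \<le> (v + sqrt v + 1) * (pi\<^sup>2 * d / 12)"
proof (rule f_fun_le_of_bounds)
  have "fA (d / 2) \<le> d / 2" using fA_le_small[of "d / 2"] assms by simp
  also have "\<dots> \<le> pi\<^sup>2 * d / 12" using pi_squared_ge_9 assms by simp
  finally show "fA (d / 2) \<le> pi\<^sup>2 * d / 12" .
  show "2 * fB (d / 2) \<le> pi\<^sup>2 * d / 12" using fB_le_small[of "d / 2"] assms by simp
qed (use assms pi_gt_zero in auto)

lemma f_fun_le_large:
  assumes "0 \<le> v" "0 < r" "r \<le> pi"
  shows "f_fun v (2 * pi - r) \<le> (v + sqrt v + 1) * (pi ^ 8 / (12 * r ^ 5))"
proof (rule f_fun_le_of_bounds)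
  have K: "pi ^ 8 / (12 * r ^ 5) = pi ^ 8 / (384 * (r / 2) ^ 5)" by (simp add: power_divide)
  have e: "(2 * pi - r) / 2 = pi - r / 2" by simp
  show "fA ((2 * pi - r) / 2) \<le> pi ^ 8 / (12 * r ^ 5)"
    and "2 * fB ((2 * pi - r) / 2) \<le> pi ^ 8 / (12 * r ^ 5)"
    unfolding e K using fA_le_large[of "r / 2"] fB_le_large[of "r / 2"] assms by simp_all
qed (use assms in auto)

lemma h_fun_bounds:
  assumes "0 < x" "0 \<le> v"
  shows "0 < h_fun x v" "h_fun x v < 2 * pi" "f_fun v (h_fun x v) \<le> x"
proof -
  define c where "c = v + sqrt v + 1"
  have "0 < c" using assms by (simp add: c_def add_nonneg_pos)
  have "0 < h_fun x v \<and> h_fun x v < 2 * pi \<and> f_fun v (h_fun x v) \<le> x"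
  proof (cases "x \<le> pi ^ 3 / 12 * c")
    case True
    define h where "h = 12 * x / (pi\<^sup>2 * c)"
    have "h_fun x v = h" using True by (simp add: h_fun_def h_def c_def)
    moreover have "0 < h" "h \<le> pi"
      using True \<open>0 < c\<close> assms by (auto simp: h_def field_simps power2_eq_square power3_eq_cube)
    moreover have "c * (pi\<^sup>2 * h / 12) = x"
      using \<open>0 < c\<close> by (simp add: h_def field_simps)
    ultimately show ?thesis using f_fun_le_small[of v h] assms pi_gt_zero by (simp add: c_def)
  next
    case False
    define r where "r = root 5 (pi ^ 8 * c / (12 * x))"
    have "h_fun x v = 2 * pi - r" using False by (simp add: h_fun_def r_def c_def)
    moreover have r5: "r ^ 5 = pi ^ 8 * c / (12 * x)" using \<open>0 < c\<close> assms by (simp add: r_def)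
    moreover have r0: "0 < r" using \<open>0 < c\<close> assms by (simp add: r_def)
    moreover have "r < pi"
    proof (rule power_less_imp_less_base[of _ 5])
      have "pi ^ 8 * c = pi ^ 5 * (pi ^ 3 * c)" by (simp add: eval_nat_numeral)
      also have "\<dots> < pi ^ 5 * (12 * x)" using False by (intro mult_strict_left_mono) auto
      finally show "r ^ 5 < pi ^ 5" using r5 assms by (simp add: divide_less_eq mult.commute)
    qed simp
    moreover have "c * (pi ^ 8 / (12 * r ^ 5)) = x"
      using r5 r0 \<open>0 < c\<close> assms by (simp add: field_simps)
    ultimately show ?thesis using f_fun_le_large[of v r] assms by (simp add: c_def)
  qed
  then show "0 < h_fun x v" "h_fun x v < 2 * pi" "f_fun v (h_fun x v) \<le> x" by auto
qed

theorem lemma2p4: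
  fixes x v :: real
  assumes "x > 0" and "v \<ge> 0"
  shows "delta_fun x v \<ge> h_fun x v"
  using delta_fun_ge h_fun_bounds[OF assms] assms(2) by blast

end
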